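(* Let $\tilde{\mathcal D}$ be a finite set of examples, let $\mathrm{sim}:\tilde{\mathcal D}\times\tilde{\mathcal D}\to\mathbb{R}$, let $C:\tilde{\mathcal D}\to[0,\infty)$, let $\tau\ge 0$, and let $\sigma:[0,\infty)\to\mathbb{R}$ be non-decreasing and concave with $\sigma(0)=0$. For $\mathcal S\subseteq\tilde{\mathcal D}$ define $$OBJ(\mathcal S)=\sum_{x_i\in\tilde{\mathcal D}}\sigma\Big(\sum_{x_j\in\mathcal S}\mathbb 1_{[\mathrm{sim}(x_i,x_j)\ge\tau]}\,\mathrm{sim}(x_i,x_j)\,C(x_j)\Big).$$ Let $s\ge 1$, let $\mathcal S^*\in\arg\max_{\mathcal S\subseteq\tilde{\mathcal D},\,|\mathcal S|\le s}OBJ(\mathcal S)$, and let $\mathcal S$ be the greedy solution of size $s$, obtained by starting from $\emptyset$ and repeatedly adding an element $x\in\tilde{\mathcal D}\setminus\mathcal S$ maximizing $OBJ(\mathcal S\cup\{x\})-OBJ(\mathcal S)$ until $|\mathcal S|=s$. Then $$OBJ(\mathcal S)\ge(1-1/e)\cdot OBJ(\mathcal S^* ).$$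
   Context: In the paper, $\mathrm{sim}$ is the cosine similarity between embeddings of augmentations of two examples, $C$ is a prediction confidence (e.g. maximum softmax probability), $\tau$ is a neighborhood threshold and $\sigma$ is a utility function (e.g. the positive part of $\tanh$); $OBJ$ is the total reduced neighborhood confidence objective for data pruning. *)

theory Defs
  imports "HOL-Analysis.Analysis"
begin

definition OBJ :: "'a set \<Rightarrow> ('a \<Rightarrow> 'a \<Rightarrow> real) \<Rightarrow> ('a \<Rightarrow> real) \<Rightarrow> real
                   \<Rightarrow> (real \<Rightarrow> real) \<Rightarrow> 'a set \<Rightarrow> real" where
  "OBJ D sim C \<tau> \<sigma> S =
     (\<Sum>xi\<in>D. \<sigma> (\<Sum>xj\<in>S. (if sim xi xj \<ge> \<tau> then 1 else 0) * sim xi xj * C xj))"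

definition is_greedy_run :: "'a set \<Rightarrow> ('a set \<Rightarrow> real) \<Rightarrow> nat \<Rightarrow> 'a list \<Rightarrow> bool" where
  "is_greedy_run D f s xs \<longleftrightarrow>
     length xs = s \<and>
     (\<forall>k<s. xs ! k \<in> D - set (take k xs) \<and>
        (\<forall>y\<in>D - set (take k xs).
           f (insert y (set (take k xs))) - f (set (take k xs))
             \<le> f (insert (xs ! k) (set (take k xs))) - f (set (take k xs))))"

end

theory Submission
  imports Defs
begin

(* OBJ is a concave-over-modular set function: a sum, over the points of D, of a monotone concave
   utility applied to nonnegative weights accumulated over the chosen set. Such functions are
   monotone and submodular, because concavity makes the increments of the utility shrink as its
   argument grows. For monotone submodular f with f {} >= 0 the classical argument of Nemhauser,
   Wolsey and Fisher applies: if S_k is the set of the first k greedy picks and T any set of size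
   at most s, submodularity gives f T - f S_k <= s (f S_(k+1) - f S_k), so the gap to f T shrinks by
   the factor 1 - 1/s at every step, and (1 - 1/s)^s <= 1/e. *)

lemma concave_on_increment_antimono:
  fixes \<sigma> :: "real \<Rightarrow> real"
  assumes "concave_on I \<sigma>" "a \<in> I" "b + w \<in> I" "a \<le> b" "0 \<le> w"
  shows "\<sigma> (b + w) - \<sigma> b \<le> \<sigma> (a + w) - \<sigma> a"
proof (cases "a = b + w")
  case True
  then show ?thesis using assms by simp
next
  case False
  have "is_interval I"
    using assms(1) concave_on_imp_convex is_interval_convex_1 by blast
  then have sub: "{a..b + w} \<subseteq> I"
    using mem_is_interval_1_I[OF _ assms(2,3)] by auto
  have concave: "concave_on {a..b + w} \<sigma>"
    using assms(1) unfolding concave_on_def by (rule convex_on_subset[OF _ sub]) simp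
  define m where "m = (\<sigma> (b + w) - \<sigma> a) / (b + w - a)"
  \<comment> \<open>both increments are compared with the chord of slope m over \<open>[a, b + w]\<close>\<close>
  have "\<sigma> (a + w) \<ge> m * ((a + w) - a) + \<sigma> a"
    using concave_onD_Icc'[OF concave, of "a + w"] assms(4,5) unfolding m_def by simp
  moreover have "(\<sigma> a - \<sigma> (b + w)) / (b + w - a) = - m"
    unfolding m_def by (simp add: minus_divide_left)
  then have "\<sigma> b \<ge> - m * ((b + w) - b) + \<sigma> (b + w)"
    using concave_onD_Icc''[OF concave, of b] assms(4,5) by simp
  ultimately show ?thesis by simp
qed

definition submodular_on :: "'a set \<Rightarrow> ('a set \<Rightarrow> real) \<Rightarrow> bool" where
  "submodular_on D f \<longleftrightarrow>
     (\<forall>A B y. A \<subseteq> B \<longrightarrow> B \<subseteq> D \<longrightarrow> y \<in> D - B \<longrightarrow>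
        f (insert y B) - f B \<le> f (insert y A) - f A)"

lemma submodular_onD:
  "submodular_on D f \<Longrightarrow> A \<subseteq> B \<Longrightarrow> B \<subseteq> D \<Longrightarrow> y \<in> D - B \<Longrightarrow>
     f (insert y B) - f B \<le> f (insert y A) - f A"
  unfolding submodular_on_def by blast

lemma submodular_on_union_le_sum_gains:
  assumes "submodular_on D f" "A \<subseteq> D" "B \<subseteq> D" "finite B"
  shows "f (A \<union> B) - f A \<le> (\<Sum>y\<in>B - A. f (insert y A) - f A)"
  using assms(4,3)
proof (induction B rule: finite_induct)
  case empty
  then show ?case by simp
next
  case (insert y B)
  have IH: "f (A \<union> B) - f A \<le> (\<Sum>y\<in>B - A. f (insert y A) - f A)"
    using insert.IH insert.prems by simp
  show ?case
  proof (cases "y \<in> A")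
    case True
    then have "A \<union> insert y B = A \<union> B" "insert y B - A = B - A" by auto
    then show ?thesis using IH by simp
  next
    case False
    have "A \<union> B \<subseteq> D" "y \<in> D - (A \<union> B)"
      using assms(2) insert.prems insert.hyps(2) False by auto
    then have gain: "f (insert y (A \<union> B)) - f (A \<union> B) \<le> f (insert y A) - f A"
      by (rule submodular_onD[OF assms(1) Un_upper1])
    have "insert y B - A = insert y (B - A)" "y \<notin> B - A"
      using False insert.hyps(2) by auto
    then have sum_eq: "(\<Sum>y\<in>insert y B - A. f (insert y A) - f A)
        = (f (insert y A) - f A) + (\<Sum>y\<in>B - A. f (insert y A) - f A)"
      using insert.hyps(1) by simp
    have union_eq: "A \<union> insert y B = insert y (A \<union> B)" by simp
    show ?thesis
      unfolding union_eq sum_eq using gain IH by linarith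
  qed
qed

lemma is_greedy_run_length: "is_greedy_run D f s xs \<Longrightarrow> length xs = s"
  unfolding is_greedy_run_def by blast

lemma is_greedy_run_pick:
  assumes "is_greedy_run D f s xs" "k < s"
  shows "xs ! k \<in> D - set (take k xs)"
    and "y \<in> D - set (take k xs) \<Longrightarrow>
      f (insert y (set (take k xs))) - f (set (take k xs))
        \<le> f (insert (xs ! k) (set (take k xs))) - f (set (take k xs))"
  using assms unfolding is_greedy_run_def by blast+

lemma is_greedy_run_set_subset:
  assumes "is_greedy_run D f s xs"
  shows "set xs \<subseteq> D"
proof
  fix x assume "x \<in> set xs"
  then obtain k where "k < length xs" "x = xs ! k"
    by (auto simp: in_set_conv_nth)
  then show "x \<in> D"
    using is_greedy_run_pick(1)[OF assms] is_greedy_run_length[OF assms] by auto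
qed

lemma is_greedy_run_gain_lower_bound:
  assumes "finite D" "mono_on (Pow D) f" "submodular_on D f"
    and run: "is_greedy_run D f s xs" "k < s"
    and "T \<subseteq> D" "card T \<le> s"
  shows "f T - f (set (take k xs)) \<le> real s * (f (set (take (Suc k) xs)) - f (set (take k xs)))"
proof -
  define S where "S = set (take k xs)"
  define \<delta> where "\<delta> = f (set (take (Suc k) xs)) - f S"
  have SD: "S \<subseteq> D"
    unfolding S_def using set_take_subset is_greedy_run_set_subset[OF run(1)] by (rule order_trans)
  have Suc_eq: "set (take (Suc k) xs) = insert (xs ! k) S"
    using run is_greedy_run_length[OF run(1)] unfolding S_def by (simp add: take_Suc_conv_app_nth)
  have pick: "xs ! k \<in> D" and greedy: "\<And>y. y \<in> D - S \<Longrightarrow> f (insert y S) - f S \<le> \<delta>"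
    using is_greedy_run_pick[OF run] unfolding S_def \<delta>_def Suc_eq by auto
  have "f S \<le> f (insert (xs ! k) S)"
    by (rule mono_onD[OF assms(2)]) (use SD pick in auto)
  then have "0 \<le> \<delta>"
    unfolding \<delta>_def Suc_eq by simp
  have "f T \<le> f (S \<union> T)"
    by (rule mono_onD[OF assms(2)]) (use SD assms(6) in auto)
  also have "\<dots> \<le> f S + (\<Sum>y\<in>T - S. f (insert y S) - f S)"
    using submodular_on_union_le_sum_gains[OF assms(3) SD assms(6) finite_subset[OF assms(6,1)]]
    by linarith
  also have "(\<Sum>y\<in>T - S. f (insert y S) - f S) \<le> (\<Sum>y\<in>T - S. \<delta>)"
    by (rule sum_mono) (use greedy assms(6) in blast)
  also have "(\<Sum>y\<in>T - S. \<delta>) \<le> real s * \<delta>"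
  proof -
    have "card (T - S) \<le> card T"
      using assms(1,6) by (intro card_mono) (auto intro: finite_subset)
    then have "real (card (T - S)) \<le> real s"
      using assms(7) by linarith
    then show ?thesis
      using \<open>0 \<le> \<delta>\<close> by (simp add: mult_right_mono)
  qed
  finally show ?thesis
    unfolding S_def \<delta>_def by linarith
qed

lemma is_greedy_run_gap_le:
  assumes "finite D" "mono_on (Pow D) f" "submodular_on D f"
    and run: "is_greedy_run D f s xs" "s \<ge> 1" "k \<le> s"
    and "T \<subseteq> D" "card T \<le> s"
  shows "f T - f (set (take k xs)) \<le> (1 - 1 / real s) ^ k * (f T - f {})"
  using run(3)
proof (induction k)
  case 0
  then show ?case by simp
next
  case (Suc k)
  have "f T - f (set (take (Suc k) xs)) \<le> (1 - 1 / real s) * (f T - f (set (take k xs)))"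
    using is_greedy_run_gain_lower_bound[OF assms(1-4), of k T] Suc.prems assms(5,7,8)
    by (simp add: field_simps)
  also have "\<dots> \<le> (1 - 1 / real s) * ((1 - 1 / real s) ^ k * (f T - f {}))"
  proof (rule mult_left_mono)
    show "f T - f (set (take k xs)) \<le> (1 - 1 / real s) ^ k * (f T - f {})"
      using Suc.IH Suc.prems by simp
    show "0 \<le> 1 - 1 / real s"
      using assms(5) by simp
  qed
  finally show ?case by simp
qed

theorem is_greedy_run_approximation:
  assumes "finite D" "mono_on (Pow D) f" "submodular_on D f" "0 \<le> f {}"
    and "is_greedy_run D f s xs" "s \<ge> 1"
    and "T \<subseteq> D" "card T \<le> s"
  shows "f (set xs) \<ge> (1 - 1 / exp 1) * f T"
proof -
  have "f T - f (set xs) \<le> (1 - 1 / real s) ^ s * (f T - f {})"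
    using is_greedy_run_gap_le[OF assms(1-3,5,6) order_refl assms(7,8)]
      is_greedy_run_length[OF assms(5)]
    by simp
  also have "\<dots> \<le> exp (- 1) * (f T - f {})"
  proof (rule mult_right_mono)
    show "(1 - 1 / real s) ^ s \<le> exp (- 1)"
      using exp_ge_one_minus_x_over_n_power_n[of 1 s] assms(6) by simp
    have "f {} \<le> f T"
      by (rule mono_onD[OF assms(2)]) (use assms(7) in auto)
    then show "0 \<le> f T - f {}"
      by simp
  qed
  finally show ?thesis
    using assms(4) by (simp add: exp_minus field_simps)
qed

definition concave_coverage ::
    "'b set \<Rightarrow> ('b \<Rightarrow> 'a \<Rightarrow> real) \<Rightarrow> (real \<Rightarrow> real) \<Rightarrow> 'a set \<Rightarrow> real" where
  "concave_coverage I w \<sigma> S = (\<Sum>i\<in>I. \<sigma> (\<Sum>j\<in>S. w i j))"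

lemma concave_coverage_mono_on:
  assumes "finite D" "\<forall>i. \<forall>j\<in>D. 0 \<le> w i j" "mono_on {0..} \<sigma>"
  shows "mono_on (Pow D) (concave_coverage I w \<sigma>)"
proof (rule mono_onI)
  fix A B assume "A \<in> Pow D" "B \<in> Pow D" "A \<le> B"
  then have sums: "0 \<le> (\<Sum>j\<in>A. w i j)" "(\<Sum>j\<in>A. w i j) \<le> (\<Sum>j\<in>B. w i j)" for i
    using assms(1,2) by (auto intro!: sum_nonneg sum_mono2 intro: finite_subset)
  have "\<sigma> (\<Sum>j\<in>A. w i j) \<le> \<sigma> (\<Sum>j\<in>B. w i j)" for i
    using sums[of i] by (intro mono_onD[OF assms(3)]) auto
  then show "concave_coverage I w \<sigma> A \<le> concave_coverage I w \<sigma> B"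
    unfolding concave_coverage_def by (rule sum_mono)
qed

lemma concave_coverage_submodular_on:
  assumes "finite D" "\<forall>i. \<forall>j\<in>D. 0 \<le> w i j" "concave_on {0..} \<sigma>"
  shows "submodular_on D (concave_coverage I w \<sigma>)"
  unfolding submodular_on_def
proof (intro allI impI)
  fix A B y assume AB: "A \<subseteq> B" "B \<subseteq> D" "y \<in> D - B"
  have fin: "finite A" "finite B"
    using AB assms(1) by (auto intro: finite_subset)
  have gain: "concave_coverage I w \<sigma> (insert y S) - concave_coverage I w \<sigma> S
      = (\<Sum>i\<in>I. \<sigma> ((\<Sum>j\<in>S. w i j) + w i y) - \<sigma> (\<Sum>j\<in>S. w i j))"
    if "finite S" "y \<notin> S" for S
    using that by (simp add: concave_coverage_def sum_subtractf add.commute)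
  have "0 \<le> (\<Sum>j\<in>A. w i j)" "(\<Sum>j\<in>A. w i j) \<le> (\<Sum>j\<in>B. w i j)" "0 \<le> w i y" for i
    using AB assms(2) fin by (auto intro!: sum_nonneg sum_mono2)
  then have "\<sigma> ((\<Sum>j\<in>B. w i j) + w i y) - \<sigma> (\<Sum>j\<in>B. w i j)
      \<le> \<sigma> ((\<Sum>j\<in>A. w i j) + w i y) - \<sigma> (\<Sum>j\<in>A. w i j)" for i
    by (intro concave_on_increment_antimono[OF assms(3)])
      (auto intro!: add_nonneg_nonneg intro: order_trans)
  moreover have "y \<notin> A" "y \<notin> B"
    using AB by auto
  ultimately show "concave_coverage I w \<sigma> (insert y B) - concave_coverage I w \<sigma> B
      \<le> concave_coverage I w \<sigma> (insert y A) - concave_coverage I w \<sigma> A"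
    using fin by (simp add: gain sum_mono)
qed

theorem theorem4:
  fixes D :: "'a set" and sim :: "'a \<Rightarrow> 'a \<Rightarrow> real" and C :: "'a \<Rightarrow> real"
    and \<tau> :: real and \<sigma> :: "real \<Rightarrow> real" and s :: nat
    and Sstar :: "'a set" and xs :: "'a list"
  assumes "finite D"
    and "\<forall>x\<in>D. C x \<ge> 0"
    and "\<tau> \<ge> 0"
    and "mono_on {0..} \<sigma>" and "concave_on {0..} \<sigma>" and "\<sigma> 0 = 0"
    and "s \<ge> 1"
    and "Sstar \<subseteq> D" and "card Sstar \<le> s"
    and "\<forall>T. T \<subseteq> D \<and> card T \<le> s \<longrightarrow> OBJ D sim C \<tau> \<sigma> T \<le> OBJ D sim C \<tau> \<sigma> Sstar"
    and "is_greedy_run D (OBJ D sim C \<tau> \<sigma>) s xs"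
  shows "OBJ D sim C \<tau> \<sigma> (set xs) \<ge> (1 - 1 / exp 1) * OBJ D sim C \<tau> \<sigma> Sstar"
proof -
  \<comment> \<open>the greedy bound holds against every feasible set\<close>
  define w where "w i j = (if sim i j \<ge> \<tau> then 1 else 0) * sim i j * C j" for i j
  have OBJ_eq: "OBJ D sim C \<tau> \<sigma> = concave_coverage D w \<sigma>"
    by (simp add: fun_eq_iff OBJ_def concave_coverage_def w_def)
  have w_nonneg: "\<forall>i. \<forall>j\<in>D. 0 \<le> w i j"
    using assms(2,3) by (simp add: w_def)
  show ?thesis
    unfolding OBJ_eq
  proof (rule is_greedy_run_approximation[OF assms(1)])
    show "mono_on (Pow D) (concave_coverage D w \<sigma>)"
      using concave_coverage_mono_on[OF assms(1) w_nonneg assms(4)] .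
    show "submodular_on D (concave_coverage D w \<sigma>)"
      using concave_coverage_submodular_on[OF assms(1) w_nonneg assms(5)] .
    show "0 \<le> concave_coverage D w \<sigma> {}"
      using assms(6) by (simp add: concave_coverage_def)
    show "is_greedy_run D (concave_coverage D w \<sigma>) s xs"
      using assms(11) unfolding OBJ_eq .
  qed (use assms(7-9) in auto)
qed

end
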